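(* Let $G$ be a finite group and $R,R'$ orthogonal $G$-representations. Then, in the lattice of $G$-weak indexing systems, $\underline{\mathbb F}^{R}\vee\underline{\mathbb F}^{R'}=\underline{\mathbb F}^{R\oplus R'}$.
   Context: For $H\le G$, $\mathbb F_H$ is the category of finite $H$-sets, $*_H$ the one-point $H$-set. A $G$-weak indexing system is an assignment $H\mapsto\mathcal C_H$ of isomorphism-closed classes of finite $H$-sets, stable under restriction to subgroups and conjugation, such that $\mathcal C_H\neq\emptyset$ implies $*_H\in\mathcal C_H$, and closed under self-indexed coproducts: if $S\in\mathcal C_H$ and for each orbit $[H/K]\subseteq S$ (with chosen point) a $K$-set $T\in\mathcal C_K$ is given, then $\coprod\mathrm{Ind}_K^HT\in\mathcal C_H$. These form a lattice under inclusion, $\vee$ denoting the join. For an orthogonal $G$-representation $R$, $\underline{\mathbb F}^R$ is the $G$-weak indexing system $\mathbb F^R_H=\{S\in\mathbb F_H\mid\text{there is an }H\text{-equivariant embedding }S\hookrightarrow R\}$. *)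

theory Defs
  imports "HOL-Analysis.Analysis" "HOL-Algebra.Group"
begin

(* A finite H-set: a finite carrier of natural numbers (any finite set is
   isomorphic to one of these) together with an action, relevant on H x carrier. *)
type_synonym 'g hset = "nat set \<times> ('g \<Rightarrow> nat \<Rightarrow> nat)"

definition Hset :: "('g,'b) monoid_scheme \<Rightarrow> 'g set \<Rightarrow> 'g hset \<Rightarrow> bool" where
  "Hset G H S \<longleftrightarrow> finite (fst S)
     \<and> (\<forall>h\<in>H. \<forall>x\<in>fst S. snd S h x \<in> fst S)
     \<and> (\<forall>x\<in>fst S. snd S \<one>\<^bsub>G\<^esub> x = x)
     \<and> (\<forall>h\<in>H. \<forall>k\<in>H. \<forall>x\<in>fst S. snd S (h \<otimes>\<^bsub>G\<^esub> k) x = snd S h (snd S k x))"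

definition Hiso :: "'g set \<Rightarrow> 'g hset \<Rightarrow> 'g hset \<Rightarrow> bool" where
  "Hiso H S T \<longleftrightarrow> (\<exists>f. bij_betw f (fst S) (fst T)
     \<and> (\<forall>h\<in>H. \<forall>x\<in>fst S. f (snd S h x) = snd T h (f x)))"

definition pt_hset :: "'g hset" where
  "pt_hset = ({0}, \<lambda>_ x. x)"

definition conj_sub :: "('g,'b) monoid_scheme \<Rightarrow> 'g \<Rightarrow> 'g set \<Rightarrow> 'g set" where
  "conj_sub G g H = (\<lambda>h. g \<otimes>\<^bsub>G\<^esub> h \<otimes>\<^bsub>G\<^esub> inv\<^bsub>G\<^esub> g) ` H"

definition conj_hset :: "('g,'b) monoid_scheme \<Rightarrow> 'g \<Rightarrow> 'g hset \<Rightarrow> 'g hset" where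
  "conj_hset G g S = (fst S, \<lambda>h x. snd S (inv\<^bsub>G\<^esub> g \<otimes>\<^bsub>G\<^esub> h \<otimes>\<^bsub>G\<^esub> g) x)"

definition stab :: "'g set \<Rightarrow> 'g hset \<Rightarrow> nat \<Rightarrow> 'g set" where
  "stab H S s = {h\<in>H. snd S h s = s}"

definition fibre :: "'g hset \<Rightarrow> (nat \<Rightarrow> nat) \<Rightarrow> nat \<Rightarrow> 'g hset" where
  "fibre X p s = ({x\<in>fst X. p x = s}, snd X)"

(* G-weak indexing systems: C H is the class of admissible H-sets, for subgroups H.
   Self-indexed coproducts are expressed via H-maps p : X -> S: X is the
   coproduct of Ind_{H_s}^H (p^-1 s) over orbit representatives s of S. *)
definition weak_indexing :: "('g,'b) monoid_scheme \<Rightarrow> ('g set \<Rightarrow> 'g hset set) \<Rightarrow> bool" where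
  "weak_indexing G C \<longleftrightarrow>
     (\<forall>H S. S \<in> C H \<longrightarrow> subgroup H G \<and> Hset G H S)
   \<and> (\<forall>H S T. S \<in> C H \<longrightarrow> Hset G H T \<longrightarrow> Hiso H S T \<longrightarrow> T \<in> C H)
   \<and> (\<forall>H K S. S \<in> C H \<longrightarrow> subgroup K G \<longrightarrow> K \<subseteq> H \<longrightarrow> S \<in> C K)
   \<and> (\<forall>H S g. S \<in> C H \<longrightarrow> g \<in> carrier G \<longrightarrow> conj_hset G g S \<in> C (conj_sub G g H))
   \<and> (\<forall>H. C H \<noteq> {} \<longrightarrow> pt_hset \<in> C H)
   \<and> (\<forall>H S X p. S \<in> C H \<longrightarrow> Hset G H X
        \<longrightarrow> (\<forall>x\<in>fst X. p x \<in> fst S)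
        \<longrightarrow> (\<forall>h\<in>H. \<forall>x\<in>fst X. p (snd X h x) = snd S h (p x))
        \<longrightarrow> (\<forall>s\<in>fst S. fibre X p s \<in> C (stab H S s))
        \<longrightarrow> X \<in> C H)"

definition wis_le :: "('g set \<Rightarrow> 'g hset set) \<Rightarrow> ('g set \<Rightarrow> 'g hset set) \<Rightarrow> bool" where
  "wis_le C D \<longleftrightarrow> (\<forall>H. C H \<subseteq> D H)"

definition is_wis_join :: "('g,'b) monoid_scheme \<Rightarrow> ('g set \<Rightarrow> 'g hset set)
     \<Rightarrow> ('g set \<Rightarrow> 'g hset set) \<Rightarrow> ('g set \<Rightarrow> 'g hset set) \<Rightarrow> bool" where
  "is_wis_join G A B J \<longleftrightarrow> weak_indexing G J \<and> wis_le A J \<and> wis_le B J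
     \<and> (\<forall>D. weak_indexing G D \<and> wis_le A D \<and> wis_le B D \<longrightarrow> wis_le J D)"

definition orth_rep :: "('g,'b) monoid_scheme \<Rightarrow> ('g \<Rightarrow> 'v::euclidean_space \<Rightarrow> 'v) \<Rightarrow> bool" where
  "orth_rep G \<rho> \<longleftrightarrow> (\<forall>g\<in>carrier G. orthogonal_transformation (\<rho> g))
     \<and> \<rho> \<one>\<^bsub>G\<^esub> = id
     \<and> (\<forall>g\<in>carrier G. \<forall>h\<in>carrier G. \<rho> (g \<otimes>\<^bsub>G\<^esub> h) = \<rho> g \<circ> \<rho> h)"

definition rep_sum :: "('g \<Rightarrow> 'v \<Rightarrow> 'v) \<Rightarrow> ('g \<Rightarrow> 'w \<Rightarrow> 'w) \<Rightarrow> 'g \<Rightarrow> 'v \<times> 'w \<Rightarrow> 'v \<times> 'w" where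
  "rep_sum \<rho> \<sigma> g = (\<lambda>(x, y). (\<rho> g x, \<sigma> g y))"

definition F_rep :: "('g,'b) monoid_scheme \<Rightarrow> ('g \<Rightarrow> 'v \<Rightarrow> 'v) \<Rightarrow> 'g set \<Rightarrow> 'g hset set" where
  "F_rep G \<rho> H = {S. subgroup H G \<and> Hset G H S
     \<and> (\<exists>f. inj_on f (fst S) \<and> (\<forall>h\<in>H. \<forall>x\<in>fst S. f (snd S h x) = \<rho> h (f x)))}"

end

theory Submission
  imports Defs
begin

(* F^R is closed under self-indexed coproducts: if p : X -> S with S embedded in R by f and
   each fibre X_s embedded H_s-equivariantly in R, inducing the fibre embeddings up from orbit
   representatives gives an H-map gamma : X -> R that is injective on every fibre, and then
   x |-> f (p x) + c gamma x is an embedding for all but finitely many reals c.  So F^(R+R') is a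
   weak indexing system, and it contains F^R and F^R'.  Conversely, if e = (e1, e2) embeds S in
   R + R', then S maps onto e1(S), which lies in F^R, and e2 embeds every fibre in R'; hence S is a
   self-indexed coproduct of sets in F^R' over a set in F^R and lies in every weak indexing
   system containing both. *)

(* With \<rho> = snd T this also expresses that f is an H-map from S to the H-set T. *)
definition equivariant_on :: "'g set \<Rightarrow> 'g hset \<Rightarrow> ('g \<Rightarrow> 'v \<Rightarrow> 'v) \<Rightarrow> (nat \<Rightarrow> 'v) \<Rightarrow> bool" where
  "equivariant_on H S \<rho> f \<longleftrightarrow> (\<forall>h\<in>H. \<forall>x\<in>fst S. f (snd S h x) = \<rho> h (f x))"

definition linear_rep :: "('g,'b) monoid_scheme \<Rightarrow> ('g \<Rightarrow> 'v::real_vector \<Rightarrow> 'v) \<Rightarrow> bool" where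
  "linear_rep G \<rho> \<longleftrightarrow> (\<forall>g\<in>carrier G. linear (\<rho> g)) \<and> \<rho> \<one>\<^bsub>G\<^esub> = id
     \<and> (\<forall>g\<in>carrier G. \<forall>h\<in>carrier G. \<rho> (g \<otimes>\<^bsub>G\<^esub> h) = \<rho> g \<circ> \<rho> h)"

lemma mem_F_rep_iff:
  "S \<in> F_rep G \<rho> H \<longleftrightarrow>
     subgroup H G \<and> Hset G H S \<and> (\<exists>f. inj_on f (fst S) \<and> equivariant_on H S \<rho> f)"
  by (simp add: F_rep_def equivariant_on_def)

lemma linear_rep_if_orth_rep: "orth_rep G \<rho> \<Longrightarrow> linear_rep G \<rho>"
  by (simp add: orth_rep_def linear_rep_def orthogonal_transformation_linear)

lemma linear_rep_rep_sum:
  assumes "linear_rep G \<rho>" and "linear_rep G \<sigma>"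
  shows "linear_rep G (rep_sum \<rho> \<sigma>)"
proof -
  have "linear (rep_sum \<rho> \<sigma> g)" if "g \<in> carrier G" for g
  proof -
    have "linear (\<rho> g)" "linear (\<sigma> g)"
      using assms that by (auto simp: linear_rep_def)
    then show ?thesis
      by (intro linearI) (auto simp: rep_sum_def linear_add linear_scale)
  qed
  with assms show ?thesis
    by (auto simp: linear_rep_def rep_sum_def fun_eq_iff)
qed

definition Hset_orbit :: "'g set \<Rightarrow> 'g hset \<Rightarrow> nat \<Rightarrow> nat set" where
  "Hset_orbit H S s = (\<lambda>h. snd S h s) ` H"

lemma equivariant_on_subset:
  "equivariant_on H S \<rho> f \<Longrightarrow> K \<subseteq> H \<Longrightarrow> equivariant_on K S \<rho> f"
  by (auto simp: equivariant_on_def)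

lemma finite_scaleR_solutions:
  fixes a b :: "'v::real_vector"
  assumes "a \<noteq> 0 \<or> b \<noteq> 0"
  shows "finite {c::real. a = c *\<^sub>R b}"
proof (cases "b = 0")
  case False
  show ?thesis
  proof (cases "\<exists>c. a = c *\<^sub>R b")
    case True
    then obtain c where "a = c *\<^sub>R b" ..
    with False have "{c. a = c *\<^sub>R b} = {c}"
      by auto
    then show ?thesis
      by simp
  qed simp
qed (use assms in simp)

lemma exists_inj_on_add_scaleR:
  fixes u w :: "'a \<Rightarrow> 'v::real_vector"
  assumes "finite A" and "inj_on (\<lambda>x. (u x, w x)) A"
  obtains c where "inj_on (\<lambda>x. u x + c *\<^sub>R w x) A"
proof -
  define bad where "bad x z = {c::real. u x - u z = c *\<^sub>R (w z - w x)}" for x z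
  have "finite (bad x z)" if "x \<in> A" "z \<in> A" "x \<noteq> z" for x z
    unfolding bad_def using assms(2) that
    by (intro finite_scaleR_solutions) (auto simp: inj_on_def)
  then have "finite (\<Union>(x, z)\<in>{(x, z) \<in> A \<times> A. x \<noteq> z}. bad x z)"
    using assms(1) by (intro finite_UN_I) (auto intro: finite_subset[of _ "A \<times> A"])
  then obtain c where c: "c \<notin> (\<Union>(x, z)\<in>{(x, z) \<in> A \<times> A. x \<noteq> z}. bad x z)"
    using ex_new_if_finite[OF infinite_UNIV_char_0] by blast
  have "inj_on (\<lambda>x. u x + c *\<^sub>R w x) A"
  proof (rule inj_onI, rule ccontr)
    fix x z assume "x \<in> A" "z \<in> A" "u x + c *\<^sub>R w x = u z + c *\<^sub>R w z" "x \<noteq> z"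
    then have "c \<in> bad x z"
      by (simp add: bad_def algebra_simps)
    with c \<open>x \<in> A\<close> \<open>z \<in> A\<close> \<open>x \<noteq> z\<close> show False
      by blast
  qed
  then show ?thesis ..
qed

lemma exists_fibre_representatives:
  obtains c where "\<And>x. x \<in> A \<Longrightarrow> c x \<in> A \<and> q (c x) = q x"
    and "\<And>x z. q x = q z \<Longrightarrow> c x = c z"
proof -
  define rep where "rep v = (SOME y. y \<in> A \<and> q y = v)" for v
  show ?thesis
  proof (rule that[of "\<lambda>x. rep (q x)"])
    show "rep (q x) \<in> A \<and> q (rep (q x)) = q x" if "x \<in> A" for x
      unfolding rep_def using someI[of "\<lambda>y. y \<in> A \<and> q y = q x" x] that by blast
    show "rep (q x) = rep (q z)" if "q x = q z" for x z
      using that by simp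
  qed
qed

context group
begin

lemma Hset_closed: "Hset G H S \<Longrightarrow> h \<in> H \<Longrightarrow> x \<in> fst S \<Longrightarrow> snd S h x \<in> fst S"
  by (simp add: Hset_def)

lemma Hset_one: "Hset G H S \<Longrightarrow> x \<in> fst S \<Longrightarrow> snd S \<one> x = x"
  by (simp add: Hset_def)

lemma Hset_mult:
  "Hset G H S \<Longrightarrow> h \<in> H \<Longrightarrow> k \<in> H \<Longrightarrow> x \<in> fst S \<Longrightarrow> snd S (h \<otimes> k) x = snd S h (snd S k x)"
  by (simp add: Hset_def)

lemma Hset_inv_act:
  assumes "subgroup H G" "Hset G H S" "h \<in> H" "x \<in> fst S"
  shows "snd S (inv h) (snd S h x) = x"
  using assms Hset_mult[of H S "inv h" h x] Hset_one[of H S x]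
  by (simp add: subgroup.m_inv_closed subgroup.mem_carrier)

lemma Hset_act_inv:
  assumes "subgroup H G" "Hset G H S" "h \<in> H" "x \<in> fst S"
  shows "snd S h (snd S (inv h) x) = x"
  using assms Hset_mult[of H S h "inv h" x] Hset_one[of H S x]
  by (simp add: subgroup.m_inv_closed subgroup.mem_carrier)

lemma Hset_restrict: "Hset G H S \<Longrightarrow> K \<subseteq> H \<Longrightarrow> Hset G K S"
  unfolding Hset_def by blast

lemma inv_mult_cancel_left: "x \<in> carrier G \<Longrightarrow> z \<in> carrier G \<Longrightarrow> inv x \<otimes> (x \<otimes> z) = z"
  by (simp add: m_assoc[symmetric])

lemma mult_inv_cancel_left: "x \<in> carrier G \<Longrightarrow> z \<in> carrier G \<Longrightarrow> x \<otimes> (inv x \<otimes> z) = z"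
  by (simp add: m_assoc[symmetric])

lemma linear_rep_linear: "linear_rep G \<rho> \<Longrightarrow> g \<in> carrier G \<Longrightarrow> linear (\<rho> g)"
  by (simp add: linear_rep_def)

lemma linear_rep_mult:
  "linear_rep G \<rho> \<Longrightarrow> g \<in> carrier G \<Longrightarrow> h \<in> carrier G \<Longrightarrow> \<rho> (g \<otimes> h) v = \<rho> g (\<rho> h v)"
  by (simp add: linear_rep_def)

lemma linear_rep_inj:
  assumes "linear_rep G \<rho>" "g \<in> carrier G"
  shows "inj (\<rho> g)"
proof (rule inj_on_inverseI)
  fix v
  show "\<rho> (inv g) (\<rho> g v) = v"
    using assms linear_rep_mult[OF assms(1), of "inv g" g v] by (simp add: linear_rep_def)
qed

lemma subgroup_stab:
  assumes "subgroup H G" "Hset G H S" "s \<in> fst S"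
  shows "subgroup (stab H S s) G"
proof (rule subgroupI)
  show "stab H S s \<subseteq> carrier G"
    using subgroup.subset[OF assms(1)] by (auto simp: stab_def)
  show "stab H S s \<noteq> {}"
    using assms Hset_one[of H S s] subgroup.one_closed by (fastforce simp: stab_def)
  show "inv h \<in> stab H S s" if "h \<in> stab H S s" for h
    using that assms Hset_inv_act[of H S h s] by (auto simp: stab_def subgroup.m_inv_closed)
  show "h \<otimes> k \<in> stab H S s" if "h \<in> stab H S s" "k \<in> stab H S s" for h k
    using that assms Hset_mult[of H S h k s] by (auto simp: stab_def subgroup.m_closed)
qed

lemma Hset_fibre:
  assumes "Hset G H X" "equivariant_on H X (snd S) p" "s \<in> fst S"
  shows "Hset G (stab H S s) (fibre X p s)"
  using assms by (auto simp: Hset_def fibre_def stab_def equivariant_on_def)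

lemma subgroup_conj_sub:
  assumes "subgroup H G" "g \<in> carrier G"
  shows "subgroup (conj_sub G g H) G"
proof -
  have "group_hom G G (\<lambda>h. g \<otimes> h \<otimes> inv g)"
    using assms(2) by unfold_locales (auto intro!: homI simp: m_assoc inv_mult_cancel_left)
  then show ?thesis
    unfolding conj_sub_def using assms(1) by (rule group_hom.subgroup_img_is_subgroup)
qed

lemma Hset_conj_hset:
  assumes "subgroup H G" "Hset G H S" "g \<in> carrier G"
  shows "Hset G (conj_sub G g H) (conj_hset G g S)"
proof -
  have HG: "h \<in> carrier G" if "h \<in> H" for h
    using that subgroup.mem_carrier[OF assms(1)] by blast
  have conj_back: "inv g \<otimes> (g \<otimes> h \<otimes> inv g) \<otimes> g = h" if "h \<in> H" for h
    using HG[OF that] assms(3) by (simp add: m_assoc inv_mult_cancel_left)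
  have conj_mult: "inv g \<otimes> ((g \<otimes> h \<otimes> inv g) \<otimes> (g \<otimes> k \<otimes> inv g)) \<otimes> g = h \<otimes> k"
    if "h \<in> H" "k \<in> H" for h k
    using HG[OF that(1)] HG[OF that(2)] assms(3) by (simp add: m_assoc inv_mult_cancel_left)
  show ?thesis
    using assms(2) subgroup.m_closed[OF assms(1)] assms(3)
    by (auto simp: Hset_def conj_sub_def conj_hset_def conj_back conj_mult)
qed

lemma Hset_orbit_act:
  assumes sub: "subgroup H G" and HS: "Hset G H S" and h: "h \<in> H" and s: "s \<in> fst S"
  shows "Hset_orbit H S (snd S h s) = Hset_orbit H S s"
proof
  show "Hset_orbit H S (snd S h s) \<subseteq> Hset_orbit H S s"
    unfolding Hset_orbit_def
  proof (rule image_subsetI)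
    fix k assume k: "k \<in> H"
    have "snd S k (snd S h s) = snd S (k \<otimes> h) s"
      using Hset_mult[OF HS k h s] by simp
    then show "snd S k (snd S h s) \<in> (\<lambda>h. snd S h s) ` H"
      using subgroup.m_closed[OF sub k h] by blast
  qed
  show "Hset_orbit H S s \<subseteq> Hset_orbit H S (snd S h s)"
    unfolding Hset_orbit_def
  proof (rule image_subsetI)
    fix k assume k: "k \<in> H"
    have hi: "inv h \<in> H"
      using subgroup.m_inv_closed[OF sub h] .
    have "snd S k s = snd S (k \<otimes> inv h) (snd S h s)"
      using Hset_mult[OF HS k hi Hset_closed[OF HS h s]] Hset_inv_act[OF sub HS h s] by simp
    then show "snd S k s \<in> (\<lambda>k. snd S k (snd S h s)) ` H"
      using subgroup.m_closed[OF sub k hi] by blast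
  qed
qed

lemma Hset_orbit_self: "subgroup H G \<Longrightarrow> Hset G H S \<Longrightarrow> s \<in> fst S \<Longrightarrow> s \<in> Hset_orbit H S s"
  unfolding Hset_orbit_def by (metis Hset_one image_eqI subgroup.one_closed)

lemma Hset_orbit_transversal:
  assumes sub: "subgroup H G" and HS: "Hset G H S"
  obtains r k where "\<And>s. s \<in> fst S \<Longrightarrow> r s \<in> fst S \<and> k s \<in> H \<and> snd S (k s) (r s) = s"
    and "\<And>h s. h \<in> H \<Longrightarrow> s \<in> fst S \<Longrightarrow> r (snd S h s) = r s"
proof -
  define r where "r s = (LEAST t. t \<in> Hset_orbit H S s)" for s
  define k where "k s = inv (SOME k. k \<in> H \<and> r s = snd S k s)" for s
  have "r s \<in> fst S \<and> k s \<in> H \<and> snd S (k s) (r s) = s" if s: "s \<in> fst S" for s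
  proof -
    have "r s \<in> Hset_orbit H S s"
      unfolding r_def using Hset_orbit_self[OF sub HS s] by (rule LeastI)
    then have "\<exists>k. k \<in> H \<and> r s = snd S k s"
      by (auto simp: Hset_orbit_def)
    then obtain k' where k': "k' \<in> H" "r s = snd S k' s" and "k s = inv k'"
      unfolding k_def by (metis (mono_tags, lifting) someI_ex)
    then show ?thesis
      using Hset_closed[OF HS k'(1) s] Hset_inv_act[OF sub HS k'(1) s] subgroup.m_inv_closed[OF sub]
      by simp
  qed
  moreover have "r (snd S h s) = r s" if "h \<in> H" "s \<in> fst S" for h s
    using Hset_orbit_act[OF sub HS that] by (simp add: r_def)
  ultimately show ?thesis
    using that by blast
qed

(* The H-map induced from the embeddings g t of the fibres over the orbit representatives t. *)
context
  fixes H :: "'a set" and S X :: "'a hset" and p r :: "nat \<Rightarrow> nat" and k :: "nat \<Rightarrow> 'a"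
  assumes sub: "subgroup H G" and HS: "Hset G H S" and HX: "Hset G H X"
    and p_mem: "\<And>x. x \<in> fst X \<Longrightarrow> p x \<in> fst S"
    and p_equivariant: "equivariant_on H X (snd S) p"
    and transversal: "\<And>s. s \<in> fst S \<Longrightarrow> r s \<in> fst S \<and> k s \<in> H \<and> snd S (k s) (r s) = s"
    and transversal_act: "\<And>h s. h \<in> H \<Longrightarrow> s \<in> fst S \<Longrightarrow> r (snd S h s) = r s"
begin

lemma transport_to_representative_fibre:
  assumes x: "x \<in> fst X"
  shows "snd X (inv (k (p x))) x \<in> fst X \<and> p (snd X (inv (k (p x))) x) = r (p x)"
proof -
  have s: "p x \<in> fst S"
    using p_mem[OF x] .
  have k: "k (p x) \<in> H" and ki: "inv (k (p x)) \<in> H"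
    using transversal[OF s] subgroup.m_inv_closed[OF sub] by auto
  have "p (snd X (inv (k (p x))) x) = snd S (inv (k (p x))) (snd S (k (p x)) (r (p x)))"
    using p_equivariant ki x transversal[OF s] by (simp add: equivariant_on_def)
  also have "\<dots> = r (p x)"
    using Hset_inv_act[OF sub HS k] transversal[OF s] by blast
  finally show ?thesis
    using Hset_closed[OF HX ki x] by simp
qed

lemma transport_act_stab:
  assumes h: "h \<in> H" and x: "x \<in> fst X"
  defines "m \<equiv> inv (k (p (snd X h x))) \<otimes> h \<otimes> k (p x)"
  shows "m \<in> stab H S (r (p x))"
    and "snd X (inv (k (p (snd X h x)))) (snd X h x) = snd X m (snd X (inv (k (p x))) x)"
proof -
  define s where "s = p x"
  have s: "s \<in> fst S" and hs: "snd S h s \<in> fst S" and phx: "p (snd X h x) = snd S h s"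
    using p_mem[OF x] Hset_closed[OF HS h] p_equivariant h x by (auto simp: s_def equivariant_on_def)
  define t k1 k2 where "t = r s" and "k1 = k s" and "k2 = k (snd S h s)"
  have t: "t \<in> fst S" and k1: "k1 \<in> H" "snd S k1 t = s"
    and k2: "k2 \<in> H" "snd S k2 t = snd S h s"
    using transversal[OF s] transversal[OF hs] transversal_act[OF h s] by (auto simp: t_def k1_def k2_def)
  have k2i: "inv k2 \<in> H" and k1i: "inv k1 \<in> H" and k2ih: "inv k2 \<otimes> h \<in> H"
    using k1 k2 h subgroup.m_inv_closed[OF sub] subgroup.m_closed[OF sub] by auto
  have m: "m = inv k2 \<otimes> h \<otimes> k1" and mH: "m \<in> H"
    using subgroup.m_closed[OF sub k2ih k1(1)] by (auto simp: m_def k1_def k2_def phx s_def)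
  have "snd S m t = snd S (inv k2) (snd S h (snd S k1 t))"
    using Hset_mult[OF HS k2ih k1(1) t] Hset_mult[OF HS k2i h] Hset_closed[OF HS k1(1) t] m by simp
  also have "\<dots> = t"
    using k1(2) k2(2) Hset_inv_act[OF sub HS k2(1) t] by simp
  finally show "m \<in> stab H S (r (p x))"
    using mH by (simp add: stab_def t_def s_def)
  have x1: "snd X (inv k1) x \<in> fst X"
    using Hset_closed[OF HX k1i x] .
  have "snd X m (snd X (inv k1) x) = snd X (inv k2 \<otimes> h) (snd X k1 (snd X (inv k1) x))"
    using Hset_mult[OF HX k2ih k1(1) x1] m by simp
  also have "\<dots> = snd X (inv k2) (snd X h x)"
    using Hset_act_inv[OF sub HX k1(1) x] Hset_mult[OF HX k2i h x] by simp
  finally show "snd X (inv (k (p (snd X h x)))) (snd X h x) = snd X m (snd X (inv (k (p x))) x)"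
    by (simp add: phx k1_def k2_def s_def)
qed

lemma induced_map_equivariant:
  assumes L: "linear_rep G \<rho>"
    and g_equivariant: "\<And>s. s \<in> fst S \<Longrightarrow> equivariant_on (stab H S s) (fibre X p s) \<rho> (g s)"
  shows "equivariant_on H X \<rho> (\<lambda>x. \<rho> (k (p x)) (g (r (p x)) (snd X (inv (k (p x))) x)))"
  unfolding equivariant_on_def
proof (intro ballI)
  fix h x assume h: "h \<in> H" and x: "x \<in> fst X"
  define y where "y z = snd X (inv (k (p z))) z" for z
  define t where "t = r (p x)"
  define k1 k2 where "k1 = k (p x)" and "k2 = k (p (snd X h x))"
  define m where "m = inv k2 \<otimes> h \<otimes> k1"
  have t: "t \<in> fst S" and k1: "k1 \<in> H" and k2: "k2 \<in> H" and ht: "r (p (snd X h x)) = t"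
    using transversal[OF p_mem[OF x]] transversal[OF p_mem[OF Hset_closed[OF HX h x]]]
      transversal_act[OF h p_mem[OF x]] p_equivariant h x
    by (auto simp: t_def k1_def k2_def equivariant_on_def)
  have hG: "h \<in> carrier G" and k1G: "k1 \<in> carrier G" and k2G: "k2 \<in> carrier G"
    and mG: "m \<in> carrier G"
    using h k1 k2 subgroup.mem_carrier[OF sub] by (auto simp: m_def)
  have "g t (y (snd X h x)) = \<rho> m (g t (y x))"
    using transport_act_stab[OF h x] transport_to_representative_fibre[OF x] g_equivariant[OF t]
    by (simp add: equivariant_on_def fibre_def y_def m_def t_def k1_def k2_def)
  then have "\<rho> k2 (g t (y (snd X h x))) = \<rho> (k2 \<otimes> m) (g t (y x))"
    using linear_rep_mult[OF L k2G mG] by simp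
  also have "k2 \<otimes> m = h \<otimes> k1"
    using hG k1G k2G by (simp add: m_def m_assoc mult_inv_cancel_left)
  finally show "\<rho> (k (p (snd X h x))) (g (r (p (snd X h x))) (snd X (inv (k (p (snd X h x)))) (snd X h x)))
      = \<rho> h (\<rho> (k (p x)) (g (r (p x)) (snd X (inv (k (p x))) x)))"
    using linear_rep_mult[OF L hG k1G] by (simp add: ht y_def t_def k1_def k2_def)
qed

lemma induced_map_inj_on_fibres:
  assumes L: "linear_rep G \<rho>"
    and g_inj: "\<And>s. s \<in> fst S \<Longrightarrow> inj_on (g s) (fst (fibre X p s))"
    and x: "x \<in> fst X" and z: "z \<in> fst X" and pxz: "p x = p z"
    and eq: "\<rho> (k (p x)) (g (r (p x)) (snd X (inv (k (p x))) x))
      = \<rho> (k (p z)) (g (r (p z)) (snd X (inv (k (p z))) z))"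
  shows "x = z"
proof -
  have k: "k (p x) \<in> H" and t: "r (p x) \<in> fst S"
    using transversal[OF p_mem[OF x]] by auto
  have "g (r (p x)) (snd X (inv (k (p x))) x) = g (r (p x)) (snd X (inv (k (p x))) z)"
    using eq pxz linear_rep_inj[OF L subgroup.mem_carrier[OF sub k]] by (simp add: inj_def)
  then have "snd X (inv (k (p x))) x = snd X (inv (k (p x))) z"
    using g_inj[OF t] transport_to_representative_fibre[OF x] transport_to_representative_fibre[OF z] pxz
    by (auto simp: inj_on_def fibre_def)
  then show "x = z"
    using Hset_act_inv[OF sub HX k x] Hset_act_inv[OF sub HX k z] by metis
qed

end

lemma exists_equivariant_inj_on_fibres:
  assumes L: "linear_rep G \<rho>" and sub: "subgroup H G" and HS: "Hset G H S" and HX: "Hset G H X"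
    and p_mem: "\<And>x. x \<in> fst X \<Longrightarrow> p x \<in> fst S" and p_equivariant: "equivariant_on H X (snd S) p"
    and fibres: "\<And>s. s \<in> fst S \<Longrightarrow>
      \<exists>g. inj_on g (fst (fibre X p s)) \<and> equivariant_on (stab H S s) (fibre X p s) \<rho> g"
  obtains \<gamma> where "equivariant_on H X \<rho> \<gamma>"
    and "\<And>x z. x \<in> fst X \<Longrightarrow> z \<in> fst X \<Longrightarrow> p x = p z \<Longrightarrow> \<gamma> x = \<gamma> z \<Longrightarrow> x = z"
proof -
  obtain r k where transversal: "\<And>s. s \<in> fst S \<Longrightarrow> r s \<in> fst S \<and> k s \<in> H \<and> snd S (k s) (r s) = s"
    and transversal_act: "\<And>h s. h \<in> H \<Longrightarrow> s \<in> fst S \<Longrightarrow> r (snd S h s) = r s"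
    using Hset_orbit_transversal[OF sub HS] by blast
  have "\<forall>s\<in>fst S. \<exists>g. inj_on g (fst (fibre X p s)) \<and> equivariant_on (stab H S s) (fibre X p s) \<rho> g"
    using fibres by blast
  from bchoice[OF this] obtain g where "\<forall>s\<in>fst S. inj_on (g s) (fst (fibre X p s))
      \<and> equivariant_on (stab H S s) (fibre X p s) \<rho> (g s)"
    by blast
  then have g_inj: "\<And>s. s \<in> fst S \<Longrightarrow> inj_on (g s) (fst (fibre X p s))"
    and g_equivariant: "\<And>s. s \<in> fst S \<Longrightarrow> equivariant_on (stab H S s) (fibre X p s) \<rho> (g s)"
    by auto
  note induced = sub HS HX p_mem p_equivariant transversal transversal_act L
  define \<gamma> where "\<gamma> x = \<rho> (k (p x)) (g (r (p x)) (snd X (inv (k (p x))) x))" for x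
  show ?thesis
  proof (rule that)
    show "equivariant_on H X \<rho> \<gamma>"
      unfolding \<gamma>_def by (rule induced_map_equivariant[OF induced g_equivariant])
    show "x = z" if "x \<in> fst X" "z \<in> fst X" "p x = p z" "\<gamma> x = \<gamma> z" for x z
      using induced_map_inj_on_fibres[OF induced g_inj that[unfolded \<gamma>_def]] .
  qed
qed

lemma F_rep_coproduct:
  assumes L: "linear_rep G \<rho>" and S: "S \<in> F_rep G \<rho> H" and HX: "Hset G H X"
    and p_mem: "\<And>x. x \<in> fst X \<Longrightarrow> p x \<in> fst S" and p_equivariant: "equivariant_on H X (snd S) p"
    and fibres: "\<And>s. s \<in> fst S \<Longrightarrow> fibre X p s \<in> F_rep G \<rho> (stab H S s)"
  shows "X \<in> F_rep G \<rho> H"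
proof -
  obtain f where sub: "subgroup H G" and HS: "Hset G H S"
    and f_inj: "inj_on f (fst S)" and f_equivariant: "equivariant_on H S \<rho> f"
    using S by (auto simp: mem_F_rep_iff)
  have embedded_fibres:
    "\<exists>g. inj_on g (fst (fibre X p s)) \<and> equivariant_on (stab H S s) (fibre X p s) \<rho> g"
    if "s \<in> fst S" for s
    using fibres[OF that] by (simp add: mem_F_rep_iff)
  obtain \<gamma> where \<gamma>_equivariant: "equivariant_on H X \<rho> \<gamma>"
    and \<gamma>_inj: "\<And>x z. x \<in> fst X \<Longrightarrow> z \<in> fst X \<Longrightarrow> p x = p z \<Longrightarrow> \<gamma> x = \<gamma> z \<Longrightarrow> x = z"
    using exists_equivariant_inj_on_fibres[OF L sub HS HX p_mem p_equivariant embedded_fibres] by blast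
  have fin: "finite (fst X)"
    using HX by (simp add: Hset_def)
  have "inj_on (\<lambda>x. (f (p x), \<gamma> x)) (fst X)"
  proof (rule inj_onI)
    fix x z assume x: "x \<in> fst X" and z: "z \<in> fst X" and "(f (p x), \<gamma> x) = (f (p z), \<gamma> z)"
    then have "p x = p z" and "\<gamma> x = \<gamma> z"
      using inj_onD[OF f_inj _ p_mem[OF x] p_mem[OF z]] by auto
    then show "x = z"
      using \<gamma>_inj[OF x z] by blast
  qed
  then obtain c where c: "inj_on (\<lambda>x. f (p x) + c *\<^sub>R \<gamma> x) (fst X)"
    by (rule exists_inj_on_add_scaleR[OF fin])
  have "equivariant_on H X \<rho> (\<lambda>x. f (p x) + c *\<^sub>R \<gamma> x)"
    unfolding equivariant_on_def
  proof (intro ballI)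
    fix h x assume h: "h \<in> H" and x: "x \<in> fst X"
    have lin: "linear (\<rho> h)"
      using linear_rep_linear[OF L subgroup.mem_carrier[OF sub h]] .
    have "f (p (snd X h x)) = \<rho> h (f (p x))" and "\<gamma> (snd X h x) = \<rho> h (\<gamma> x)"
      using f_equivariant p_equivariant \<gamma>_equivariant h x p_mem[OF x] by (auto simp: equivariant_on_def)
    then show "f (p (snd X h x)) + c *\<^sub>R \<gamma> (snd X h x) = \<rho> h (f (p x) + c *\<^sub>R \<gamma> x)"
      by (simp add: linear_add[OF lin] linear_scale[OF lin])
  qed
  with sub HX c show ?thesis
    unfolding mem_F_rep_iff by blast
qed

lemma F_rep_Hiso:
  assumes S: "S \<in> F_rep G \<rho> H" and HT: "Hset G H T" and iso: "Hiso H S T"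
  shows "T \<in> F_rep G \<rho> H"
proof -
  obtain f where sub: "subgroup H G" and HS: "Hset G H S"
    and f_inj: "inj_on f (fst S)" and f_equivariant: "equivariant_on H S \<rho> f"
    using S by (auto simp: mem_F_rep_iff)
  obtain \<phi> where \<phi>: "bij_betw \<phi> (fst S) (fst T)"
    and \<phi>_equivariant: "\<And>h x. h \<in> H \<Longrightarrow> x \<in> fst S \<Longrightarrow> \<phi> (snd S h x) = snd T h (\<phi> x)"
    using iso by (auto simp: Hiso_def)
  define \<psi> where "\<psi> = inv_into (fst S) \<phi>"
  have \<psi>: "bij_betw \<psi> (fst T) (fst S)"
    unfolding \<psi>_def by (rule bij_betw_inv_into[OF \<phi>])
  have \<psi>_equivariant: "\<psi> (snd T h t) = snd S h (\<psi> t)" if h: "h \<in> H" and t: "t \<in> fst T" for h t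
  proof -
    have x: "\<psi> t \<in> fst S" and t_eq: "t = \<phi> (\<psi> t)"
      using \<psi> \<phi> t by (auto simp: \<psi>_def bij_betw_apply bij_betw_inv_into_right)
    have "\<psi> (snd T h t) = \<psi> (\<phi> (snd S h (\<psi> t)))"
      using \<phi>_equivariant[OF h x] t_eq by simp
    also have "\<dots> = snd S h (\<psi> t)"
      using bij_betw_inv_into_left[OF \<phi> Hset_closed[OF HS h x]] by (simp add: \<psi>_def)
    finally show ?thesis .
  qed
  have "inj_on (f \<circ> \<psi>) (fst T)"
    using f_inj \<psi> by (simp add: comp_inj_on bij_betw_def)
  moreover have "equivariant_on H T \<rho> (f \<circ> \<psi>)"
    using f_equivariant \<psi>_equivariant \<psi> by (simp add: equivariant_on_def bij_betw_apply)
  ultimately show ?thesis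
    using sub HT unfolding mem_F_rep_iff by blast
qed

lemma F_rep_restrict:
  "S \<in> F_rep G \<rho> H \<Longrightarrow> subgroup K G \<Longrightarrow> K \<subseteq> H \<Longrightarrow> S \<in> F_rep G \<rho> K"
  unfolding mem_F_rep_iff by (meson Hset_restrict equivariant_on_subset)

lemma F_rep_conj_hset:
  assumes L: "linear_rep G \<rho>" and S: "S \<in> F_rep G \<rho> H" and g: "g \<in> carrier G"
  shows "conj_hset G g S \<in> F_rep G \<rho> (conj_sub G g H)"
proof -
  obtain f where sub: "subgroup H G" and HS: "Hset G H S"
    and f_inj: "inj_on f (fst S)" and f_equivariant: "equivariant_on H S \<rho> f"
    using S by (auto simp: mem_F_rep_iff)
  have "inj_on (\<rho> g \<circ> f) (fst (conj_hset G g S))"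
    using comp_inj_on[OF f_inj inj_on_subset[OF linear_rep_inj[OF L g] subset_UNIV]]
    by (simp add: conj_hset_def)
  moreover have "equivariant_on (conj_sub G g H) (conj_hset G g S) \<rho> (\<rho> g \<circ> f)"
    unfolding equivariant_on_def conj_sub_def
  proof (intro ballI, elim imageE)
    fix h' h x assume h: "h \<in> H" and h': "h' = g \<otimes> h \<otimes> inv g" and x: "x \<in> fst (conj_hset G g S)"
    have hG: "h \<in> carrier G"
      using subgroup.mem_carrier[OF sub h] .
    have "snd (conj_hset G g S) h' x = snd S h x"
      using hG g by (simp add: conj_hset_def h' m_assoc inv_mult_cancel_left)
    then have "(\<rho> g \<circ> f) (snd (conj_hset G g S) h' x) = \<rho> (g \<otimes> h) (f x)"
      using f_equivariant h x linear_rep_mult[OF L g hG] by (simp add: equivariant_on_def conj_hset_def)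
    also have "g \<otimes> h = h' \<otimes> g"
      using hG g by (simp add: h' m_assoc)
    finally show "(\<rho> g \<circ> f) (snd (conj_hset G g S) h' x) = \<rho> h' ((\<rho> g \<circ> f) x)"
      using linear_rep_mult[OF L _ g] hG g by (simp add: h')
  qed
  ultimately show ?thesis
    using subgroup_conj_sub[OF sub g] Hset_conj_hset[OF sub HS g] unfolding mem_F_rep_iff by blast
qed

lemma F_rep_pt_hset:
  assumes "linear_rep G \<rho>" and "subgroup H G"
  shows "pt_hset \<in> F_rep G \<rho> H"
proof -
  have "\<rho> h 0 = 0" if "h \<in> H" for h
    using linear_0[OF linear_rep_linear[OF assms(1) subgroup.mem_carrier[OF assms(2) that]]] .
  then have "equivariant_on H pt_hset \<rho> (\<lambda>_. 0)"
    by (simp add: equivariant_on_def)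
  then show ?thesis
    using assms(2) by (auto simp: mem_F_rep_iff Hset_def pt_hset_def)
qed

theorem weak_indexing_F_rep:
  assumes L: "linear_rep G \<rho>"
  shows "weak_indexing G (F_rep G \<rho>)"
  unfolding weak_indexing_def
proof (intro conjI allI impI)
  fix H S
  assume "S \<in> F_rep G \<rho> H"
  then show "subgroup H G" and "Hset G H S"
    by (simp_all add: mem_F_rep_iff)
next
  fix H S T
  assume "S \<in> F_rep G \<rho> H" "Hset G H T" "Hiso H S T"
  then show "T \<in> F_rep G \<rho> H"
    by (rule F_rep_Hiso)
next
  fix H K S
  assume "S \<in> F_rep G \<rho> H" "subgroup K G" "K \<subseteq> H"
  then show "S \<in> F_rep G \<rho> K"
    by (rule F_rep_restrict)
next
  fix H S g
  assume "S \<in> F_rep G \<rho> H" "g \<in> carrier G"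
  then show "conj_hset G g S \<in> F_rep G \<rho> (conj_sub G g H)"
    by (rule F_rep_conj_hset[OF L])
next
  fix H
  assume "F_rep G \<rho> H \<noteq> {}"
  then show "pt_hset \<in> F_rep G \<rho> H"
    using F_rep_pt_hset[OF L] by (auto simp: mem_F_rep_iff)
next
  fix H S X p
  assume S: "S \<in> F_rep G \<rho> H" and HX: "Hset G H X" and "\<forall>x\<in>fst X. p x \<in> fst S"
    and "\<forall>h\<in>H. \<forall>x\<in>fst X. p (snd X h x) = snd S h (p x)"
    and "\<forall>s\<in>fst S. fibre X p s \<in> F_rep G \<rho> (stab H S s)"
  then show "X \<in> F_rep G \<rho> H"
    using F_rep_coproduct[OF L S HX, of p] by (simp add: equivariant_on_def)
qed

lemma F_rep_le_rep_sum_left: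
  assumes "linear_rep G \<sigma>"
  shows "wis_le (F_rep G \<rho>) (F_rep G (rep_sum \<rho> \<sigma>))"
  unfolding wis_le_def
proof (intro allI subsetI)
  fix H S assume "S \<in> F_rep G \<rho> H"
  then obtain f where sub: "subgroup H G" and HS: "Hset G H S"
    and f_inj: "inj_on f (fst S)" and f_equivariant: "equivariant_on H S \<rho> f"
    by (auto simp: mem_F_rep_iff)
  have "\<sigma> h 0 = 0" if "h \<in> H" for h
    using linear_0[OF linear_rep_linear[OF assms subgroup.mem_carrier[OF sub that]]] .
  then have "equivariant_on H S (rep_sum \<rho> \<sigma>) (\<lambda>x. (f x, 0))"
    using f_equivariant by (simp add: equivariant_on_def rep_sum_def)
  moreover have "inj_on (\<lambda>x. (f x, 0)) (fst S)"
    using f_inj by (simp add: inj_on_def)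
  ultimately show "S \<in> F_rep G (rep_sum \<rho> \<sigma>) H"
    using sub HS unfolding mem_F_rep_iff by blast
qed

lemma F_rep_le_rep_sum_right:
  assumes "linear_rep G \<rho>"
  shows "wis_le (F_rep G \<sigma>) (F_rep G (rep_sum \<rho> \<sigma>))"
  unfolding wis_le_def
proof (intro allI subsetI)
  fix H S assume "S \<in> F_rep G \<sigma> H"
  then obtain f where sub: "subgroup H G" and HS: "Hset G H S"
    and f_inj: "inj_on f (fst S)" and f_equivariant: "equivariant_on H S \<sigma> f"
    by (auto simp: mem_F_rep_iff)
  have "\<rho> h 0 = 0" if "h \<in> H" for h
    using linear_0[OF linear_rep_linear[OF assms subgroup.mem_carrier[OF sub that]]] .
  then have "equivariant_on H S (rep_sum \<rho> \<sigma>) (\<lambda>x. (0, f x))"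
    using f_equivariant by (simp add: equivariant_on_def rep_sum_def)
  moreover have "inj_on (\<lambda>x. (0, f x)) (fst S)"
    using f_inj by (simp add: inj_on_def)
  ultimately show "S \<in> F_rep G (rep_sum \<rho> \<sigma>) H"
    using sub HS unfolding mem_F_rep_iff by blast
qed

lemma Hset_quotient_by_representatives:
  assumes HS: "Hset G H S" and q_equivariant: "equivariant_on H S \<rho> q"
    and c: "\<And>x. x \<in> fst S \<Longrightarrow> c x \<in> fst S \<and> q (c x) = q x"
    and c_cong: "\<And>x z. q x = q z \<Longrightarrow> c x = c z"
  shows "Hset G H ({x \<in> fst S. c x = x}, \<lambda>h x. c (snd S h x))" (is "Hset G H ?S'")
    and "equivariant_on H S (\<lambda>h x. c (snd S h x)) c"
proof -
  have c_idem: "c (c x) = c x" if "x \<in> fst S" for x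
    using c_cong[of "c x" x] c[OF that] by blast
  have c_act: "c (snd S h (c x)) = c (snd S h x)" if h: "h \<in> H" and x: "x \<in> fst S" for h x
  proof (rule c_cong)
    show "q (snd S h (c x)) = q (snd S h x)"
      using q_equivariant h x c[OF x] by (simp add: equivariant_on_def)
  qed
  show "equivariant_on H S (\<lambda>h x. c (snd S h x)) c"
    using c_act by (simp add: equivariant_on_def)
  show "Hset G H ?S'"
    unfolding Hset_def
  proof (intro conjI ballI)
    show "finite (fst ?S')"
      using HS by (simp add: Hset_def)
    show "snd ?S' h x \<in> fst ?S'" if h: "h \<in> H" and x: "x \<in> fst ?S'" for h x
      using Hset_closed[OF HS h] x c c_idem by simp
    show "snd ?S' \<one> x = x" if "x \<in> fst ?S'" for x
      using that Hset_one[OF HS] by simp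
    show "snd ?S' (h \<otimes> k) x = snd ?S' h (snd ?S' k x)"
      if h: "h \<in> H" and k: "k \<in> H" and x: "x \<in> fst ?S'" for h k x
      using x Hset_mult[OF HS h k] c_act[OF h Hset_closed[OF HS k]] by simp
  qed
qed

lemma Hset_quotient_by_equivariant_map:
  assumes HS: "Hset G H S" and q_equivariant: "equivariant_on H S \<rho> q"
  obtains S' c where "Hset G H S'" and "\<And>x. x \<in> fst S \<Longrightarrow> c x \<in> fst S'"
    and "equivariant_on H S (snd S') c" and "\<And>x. x \<in> fst S \<Longrightarrow> q (c x) = q x"
    and "inj_on q (fst S')" and "equivariant_on H S' \<rho> q"
proof -
  obtain c where c: "\<And>x. x \<in> fst S \<Longrightarrow> c x \<in> fst S \<and> q (c x) = q x"
    and c_cong: "\<And>x z. q x = q z \<Longrightarrow> c x = c z"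
    using exists_fibre_representatives[of "fst S" q] by blast
  define S' where "S' = ({x \<in> fst S. c x = x}, \<lambda>h x. c (snd S h x))"
  have HS': "Hset G H S'" and c_equivariant: "equivariant_on H S (snd S') c"
    using Hset_quotient_by_representatives[OF HS q_equivariant c c_cong] by (simp_all add: S'_def)
  show ?thesis
  proof (rule that[OF HS' _ c_equivariant])
    show "c x \<in> fst S'" if "x \<in> fst S" for x
      using c_cong[of "c x" x] c[OF that] by (simp add: S'_def)
    show "q (c x) = q x" if "x \<in> fst S" for x
      using c[OF that] by blast
    show "inj_on q (fst S')"
    proof (rule inj_onI)
      fix x z assume "x \<in> fst S'" "z \<in> fst S'" "q x = q z"
      then show "x = z"
        using c_cong[of x z] by (simp add: S'_def)
    qed
    show "equivariant_on H S' \<rho> q"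
      using q_equivariant c Hset_closed[OF HS] by (simp add: equivariant_on_def S'_def)
  qed
qed

lemma weak_indexing_coproduct:
  assumes "weak_indexing G D" and "S \<in> D H" and "Hset G H X"
    and "\<And>x. x \<in> fst X \<Longrightarrow> p x \<in> fst S" and "equivariant_on H X (snd S) p"
    and "\<And>s. s \<in> fst S \<Longrightarrow> fibre X p s \<in> D (stab H S s)"
  shows "X \<in> D H"
proof -
  have "\<forall>H S X p. S \<in> D H \<longrightarrow> Hset G H X
      \<longrightarrow> (\<forall>x\<in>fst X. p x \<in> fst S)
      \<longrightarrow> (\<forall>h\<in>H. \<forall>x\<in>fst X. p (snd X h x) = snd S h (p x))
      \<longrightarrow> (\<forall>s\<in>fst S. fibre X p s \<in> D (stab H S s))
      \<longrightarrow> X \<in> D H"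
    using assms(1) unfolding weak_indexing_def by (elim conjE)
  then show ?thesis
    using assms(2-) unfolding equivariant_on_def by blast
qed

lemma F_rep_rep_sum_le:
  assumes D: "weak_indexing G D"
    and D\<rho>: "wis_le (F_rep G \<rho>) D" and D\<sigma>: "wis_le (F_rep G \<sigma>) D"
  shows "wis_le (F_rep G (rep_sum \<rho> \<sigma>)) D"
  unfolding wis_le_def
proof (intro allI subsetI)
  fix H S assume "S \<in> F_rep G (rep_sum \<rho> \<sigma>) H"
  then obtain e where sub: "subgroup H G" and HS: "Hset G H S"
    and e_inj: "inj_on e (fst S)" and e_equivariant: "equivariant_on H S (rep_sum \<rho> \<sigma>) e"
    by (auto simp: mem_F_rep_iff)
  define e1 e2 where "e1 = fst \<circ> e" and "e2 = snd \<circ> e"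
  have e1_equivariant: "equivariant_on H S \<rho> e1" and e2_equivariant: "equivariant_on H S \<sigma> e2"
    using e_equivariant by (auto simp: equivariant_on_def rep_sum_def e1_def e2_def split: prod.splits)
  obtain S' c where HS': "Hset G H S'" and c_mem: "\<And>x. x \<in> fst S \<Longrightarrow> c x \<in> fst S'"
    and c_equivariant: "equivariant_on H S (snd S') c" and e1_c: "\<And>x. x \<in> fst S \<Longrightarrow> e1 (c x) = e1 x"
    and e1_inj: "inj_on e1 (fst S')" and e1_equivariant': "equivariant_on H S' \<rho> e1"
    using Hset_quotient_by_equivariant_map[OF HS e1_equivariant] by blast
  have "S' \<in> F_rep G \<rho> H"
    unfolding mem_F_rep_iff using sub HS' e1_inj e1_equivariant' by blast
  then have S'_D: "S' \<in> D H"
    using D\<rho> by (auto simp: wis_le_def)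
  have fibres_D: "fibre S c s \<in> D (stab H S' s)" if s: "s \<in> fst S'" for s
  proof -
    have "inj_on e2 (fst (fibre S c s))"
    proof (rule inj_onI)
      fix x z assume "x \<in> fst (fibre S c s)" "z \<in> fst (fibre S c s)" and e2_eq: "e2 x = e2 z"
      then have x: "x \<in> fst S" and z: "z \<in> fst S" and "c x = c z"
        by (auto simp: fibre_def)
      then have "e1 x = e1 z"
        using e1_c by metis
      with e2_eq have "e x = e z"
        by (simp add: e1_def e2_def prod_eq_iff)
      then show "x = z"
        using e_inj x z by (simp add: inj_on_def)
    qed
    moreover have "equivariant_on (stab H S' s) (fibre S c s) \<sigma> e2"
      using e2_equivariant by (auto simp: equivariant_on_def fibre_def stab_def)
    ultimately have "fibre S c s \<in> F_rep G \<sigma> (stab H S' s)"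
      using subgroup_stab[OF sub HS' s] Hset_fibre[OF HS c_equivariant s]
      unfolding mem_F_rep_iff by blast
    then show ?thesis
      using D\<sigma> by (auto simp: wis_le_def)
  qed
  show "S \<in> D H"
    by (rule weak_indexing_coproduct[OF D S'_D HS c_mem c_equivariant fibres_D])
qed

end

theorem mainTheorem11:
  fixes G :: "('g, 'b) monoid_scheme"
    and \<rho> :: "'g \<Rightarrow> 'v::euclidean_space \<Rightarrow> 'v"
    and \<sigma> :: "'g \<Rightarrow> 'w::euclidean_space \<Rightarrow> 'w"
  assumes "group G" and "finite (carrier G)"
    and "orth_rep G \<rho>" and "orth_rep G \<sigma>"
  shows "is_wis_join G (F_rep G \<rho>) (F_rep G \<sigma>) (F_rep G (rep_sum \<rho> \<sigma>))"
proof -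
  have L\<rho>: "linear_rep G \<rho>" and L\<sigma>: "linear_rep G \<sigma>"
    using assms(3,4) by (simp_all add: linear_rep_if_orth_rep)
  show ?thesis
    unfolding is_wis_join_def
    using group.weak_indexing_F_rep[OF assms(1) linear_rep_rep_sum[OF L\<rho> L\<sigma>]]
      group.F_rep_le_rep_sum_left[OF assms(1) L\<sigma>] group.F_rep_le_rep_sum_right[OF assms(1) L\<rho>]
      group.F_rep_rep_sum_le[OF assms(1)]
    by blast
qed

end
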